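(* Let $(a,b)\in\mathbb{C}^2$ and $X=\{u_1x=v_1y,\ u_2z=v_2t,\ w^2+xy+zt=a(xt+yz)+b(xz+yt)\}\subset\mathbb{P}^1\times\mathbb{P}^1\times\mathbb{P}^4$, and let $G\subset\mathrm{Aut}(X)$ be the group generated by $\tau_1,\tau_2,\tau_3$. Then: (1) if $X$ is smooth, then $X$ has no $G$-fixed points; (2) if $X$ has exactly one singular point, then this singular point is the only $G$-fixed point in $X$.
   Context: Coordinates are $([u_1:v_1],[u_2:v_2],[x:y:z:t:w])$. The involutions are $\tau_1\colon([u_1:v_1],[u_2:v_2],[x:y:z:t:w])\mapsto([v_1:u_1],[v_2:u_2],[y:x:t:z:w])$, $\tau_2\colon\mapsto([u_2:v_2],[u_1:v_1],[z:t:x:y:w])$, $\tau_3\colon\mapsto([u_1:v_1],[u_2:v_2],[x:y:z:t:-w])$; $G\cong\boldsymbol{\mu}_2^3$. *)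

theory Defs
  imports "HOL-Analysis.Analysis"
begin

text \<open>Homogeneous coordinates of a point of P^1 x P^1 x P^4 are stored in a function
  p :: nat => complex, using the indices
  0 = u1, 1 = v1, 2 = u2, 3 = v2, 4 = x, 5 = y, 6 = z, 7 = t, 8 = w
  (values at indices >= 9 are irrelevant).\<close>

type_synonym hcoord = "nat \<Rightarrow> complex"

definition valid_pt :: "hcoord \<Rightarrow> bool" where
  "valid_pt p \<longleftrightarrow> (\<exists>i\<in>{0,1}. p i \<noteq> 0) \<and> (\<exists>i\<in>{2,3}. p i \<noteq> 0)
      \<and> (\<exists>i\<in>{4..8}. p i \<noteq> 0)"

definition proj_eq :: "hcoord \<Rightarrow> hcoord \<Rightarrow> bool" where
  "proj_eq p q \<longleftrightarrow> (\<exists>c1 c2 c3. c1 \<noteq> 0 \<and> c2 \<noteq> 0 \<and> c3 \<noteq> 0 \<and>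
      (\<forall>i\<in>{0,1}. q i = c1 * p i) \<and> (\<forall>i\<in>{2,3}. q i = c2 * p i) \<and>
      (\<forall>i\<in>{4..8}. q i = c3 * p i))"

definition F1 :: "hcoord \<Rightarrow> complex" where
  "F1 p = p 0 * p 4 - p 1 * p 5"

definition F2 :: "hcoord \<Rightarrow> complex" where
  "F2 p = p 2 * p 6 - p 3 * p 7"

definition F3 :: "complex \<Rightarrow> complex \<Rightarrow> hcoord \<Rightarrow> complex" where
  "F3 a b p = (p 8)^2 + p 4 * p 5 + p 6 * p 7
      - a * (p 4 * p 7 + p 5 * p 6) - b * (p 4 * p 6 + p 5 * p 7)"

definition onX :: "complex \<Rightarrow> complex \<Rightarrow> hcoord \<Rightarrow> bool" where
  "onX a b p \<longleftrightarrow> valid_pt p \<and> F1 p = 0 \<and> F2 p = 0 \<and> F3 a b p = 0"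

definition pderiv_at :: "(hcoord \<Rightarrow> complex) \<Rightarrow> hcoord \<Rightarrow> nat \<Rightarrow> complex" where
  "pderiv_at F p i = deriv (\<lambda>s. F (p(i := s))) (p i)"

text \<open>Jacobian criterion: p is a singular point of X iff the 3 x 9 Jacobian matrix of
  (F1, F2, F3) with respect to all homogeneous coordinates has rank < 3, i.e. its
  three rows are linearly dependent.\<close>
definition singX :: "complex \<Rightarrow> complex \<Rightarrow> hcoord \<Rightarrow> bool" where
  "singX a b p \<longleftrightarrow> onX a b p \<and>
     (\<exists>c1 c2 c3. (c1, c2, c3) \<noteq> (0, 0, 0) \<and>
        (\<forall>i<9. c1 * pderiv_at F1 p i + c2 * pderiv_at F2 p i + c3 * pderiv_at (F3 a b) p i = 0))"

definition smoothX :: "complex \<Rightarrow> complex \<Rightarrow> bool" where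
  "smoothX a b \<longleftrightarrow> (\<forall>p. \<not> singX a b p)"

definition tau1 :: "hcoord \<Rightarrow> hcoord" where
  "tau1 p = p(0 := p 1, 1 := p 0, 2 := p 3, 3 := p 2, 4 := p 5, 5 := p 4, 6 := p 7, 7 := p 6)"

definition tau2 :: "hcoord \<Rightarrow> hcoord" where
  "tau2 p = p(0 := p 2, 1 := p 3, 2 := p 0, 3 := p 1, 4 := p 6, 5 := p 7, 6 := p 4, 7 := p 5)"

definition tau3 :: "hcoord \<Rightarrow> hcoord" where
  "tau3 p = p(8 := - p 8)"

text \<open>The group G generated by tau1, tau2, tau3 (as maps on coordinates; each is an
  involution, so the monoid generated is the group generated).\<close>
inductive_set Ggrp :: "(hcoord \<Rightarrow> hcoord) set" where
  G_id: "id \<in> Ggrp"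
| G_1: "g \<in> Ggrp \<Longrightarrow> tau1 \<circ> g \<in> Ggrp"
| G_2: "g \<in> Ggrp \<Longrightarrow> tau2 \<circ> g \<in> Ggrp"
| G_3: "g \<in> Ggrp \<Longrightarrow> tau3 \<circ> g \<in> Ggrp"

definition G_fixed_pt :: "complex \<Rightarrow> complex \<Rightarrow> hcoord \<Rightarrow> bool" where
  "G_fixed_pt a b p \<longleftrightarrow> onX a b p \<and> (\<forall>g\<in>Ggrp. proj_eq p (g p))"

end

theory Submission
  imports Defs
begin

text \<open>A G-fixed point is fixed by tau3, which forces w = 0 (otherwise x = y = z = t = 0 and
  w^2 = 0); being fixed by tau1 and tau2 it then has the form (x : dx : fx : dfx : 0) with
  d, f = \<plusminus>1. There the gradient of the quadric F3 in (x, y, z, t, w) equals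
  xK (1, d, f, df, 0) with K = d - adf - bf, while F3 itself equals 2 x^2 K, so F3 = 0 forces
  the gradient of F3 to vanish: every fixed point is singular. Conversely G preserves the
  singular locus and respects proportionality of coordinates, so a unique singular point is
  G-fixed.\<close>

lemma atLeastAtMost_4_8: "{4..8::nat} = {4, 5, 6, 7, 8}"
  by auto

lemma all_less_9: "(\<forall>i<9::nat. P i) \<longleftrightarrow> P 0 \<and> P 1 \<and> P 2 \<and> P 3 \<and> P 4 \<and> P 5 \<and> P 6 \<and> P 7 \<and> P 8"
  by (simp add: lessThan_nat_numeral lessThan_Suc flip: lessThan_iff Ball_def) blast

lemma valid_pt_iff:
  "valid_pt p \<longleftrightarrow> (p 0 \<noteq> 0 \<or> p 1 \<noteq> 0) \<and> (p 2 \<noteq> 0 \<or> p 3 \<noteq> 0)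
     \<and> (p 4 \<noteq> 0 \<or> p 5 \<noteq> 0 \<or> p 6 \<noteq> 0 \<or> p 7 \<noteq> 0 \<or> p 8 \<noteq> 0)"
  by (auto simp: valid_pt_def atLeastAtMost_4_8)

lemma proj_eq_iff:
  "proj_eq p q \<longleftrightarrow> (\<exists>c1 c2 c3. c1 \<noteq> 0 \<and> c2 \<noteq> 0 \<and> c3 \<noteq> 0 \<and>
     q 0 = c1 * p 0 \<and> q 1 = c1 * p 1 \<and> q 2 = c2 * p 2 \<and> q 3 = c2 * p 3 \<and>
     q 4 = c3 * p 4 \<and> q 5 = c3 * p 5 \<and> q 6 = c3 * p 6 \<and> q 7 = c3 * p 7 \<and> q 8 = c3 * p 8)"
  by (simp add: proj_eq_def atLeastAtMost_4_8)

lemma equivp_proj_eq: "equivp proj_eq"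
proof (rule equivpI)
  show "reflp proj_eq"
    by (rule reflpI) (auto simp: proj_eq_def intro!: exI[of _ 1])
  show "symp proj_eq"
    unfolding proj_eq_def
    by (rule sympI, elim exE conjE, rule_tac x="inverse c1" in exI, rule_tac x="inverse c2" in exI,
        rule_tac x="inverse c3" in exI) auto
  show "transp proj_eq"
    unfolding proj_eq_def
    by (rule transpI, elim exE conjE, rule_tac x="c1a * c1" in exI, rule_tac x="c2a * c2" in exI,
        rule_tac x="c3a * c3" in exI) auto
qed

lemma pderiv_atI:
  "((\<lambda>s. F (p(i := s))) has_field_derivative D) (at (p i)) \<Longrightarrow> pderiv_at F p i = D"
  unfolding pderiv_at_def by (rule DERIV_imp_deriv)

lemma pderiv_F1:
  "pderiv_at F1 p 0 = p 4" "pderiv_at F1 p 1 = - p 5" "pderiv_at F1 p 2 = 0"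
  "pderiv_at F1 p 3 = 0" "pderiv_at F1 p 4 = p 0" "pderiv_at F1 p 5 = - p 1"
  "pderiv_at F1 p 6 = 0" "pderiv_at F1 p 7 = 0" "pderiv_at F1 p 8 = 0"
  by (auto simp: F1_def intro!: pderiv_atI derivative_eq_intros)

lemma pderiv_F2:
  "pderiv_at F2 p 0 = 0" "pderiv_at F2 p 1 = 0" "pderiv_at F2 p 2 = p 6"
  "pderiv_at F2 p 3 = - p 7" "pderiv_at F2 p 4 = 0" "pderiv_at F2 p 5 = 0"
  "pderiv_at F2 p 6 = p 2" "pderiv_at F2 p 7 = - p 3" "pderiv_at F2 p 8 = 0"
  by (auto simp: F2_def intro!: pderiv_atI derivative_eq_intros)

lemma pderiv_F3:
  "pderiv_at (F3 a b) p 0 = 0" "pderiv_at (F3 a b) p 1 = 0"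
  "pderiv_at (F3 a b) p 2 = 0" "pderiv_at (F3 a b) p 3 = 0"
  "pderiv_at (F3 a b) p 4 = p 5 - a * p 7 - b * p 6"
  "pderiv_at (F3 a b) p 5 = p 4 - a * p 6 - b * p 7"
  "pderiv_at (F3 a b) p 6 = p 7 - a * p 5 - b * p 4"
  "pderiv_at (F3 a b) p 7 = p 6 - a * p 4 - b * p 5"
  "pderiv_at (F3 a b) p 8 = 2 * p 8"
  by (auto simp: F3_def intro!: pderiv_atI derivative_eq_intros)

lemma singX_iff:
  "singX a b p \<longleftrightarrow> onX a b p \<and>
    (\<exists>c1 c2 c3. (c1, c2, c3) \<noteq> (0, 0, 0) \<and>
       c1 * p 4 = 0 \<and> c1 * p 5 = 0 \<and> c2 * p 6 = 0 \<and> c2 * p 7 = 0 \<and>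
       c1 * p 0 + c3 * (p 5 - a * p 7 - b * p 6) = 0 \<and>
       c3 * (p 4 - a * p 6 - b * p 7) = c1 * p 1 \<and>
       c2 * p 2 + c3 * (p 7 - a * p 5 - b * p 4) = 0 \<and>
       c3 * (p 6 - a * p 4 - b * p 5) = c2 * p 3 \<and>
       c3 * p 8 = 0)"
  unfolding singX_def all_less_9 pderiv_F1 pderiv_F2 pderiv_F3
  by (simp add: eq_neg_iff_add_eq_0 add.commute)

lemma tau_apply:
  "tau1 p 0 = p 1" "tau1 p 1 = p 0" "tau1 p 2 = p 3" "tau1 p 3 = p 2" "tau1 p 4 = p 5"
  "tau1 p 5 = p 4" "tau1 p 6 = p 7" "tau1 p 7 = p 6" "tau1 p 8 = p 8"
  "tau2 p 0 = p 2" "tau2 p 1 = p 3" "tau2 p 2 = p 0" "tau2 p 3 = p 1" "tau2 p 4 = p 6"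
  "tau2 p 5 = p 7" "tau2 p 6 = p 4" "tau2 p 7 = p 5" "tau2 p 8 = p 8"
  "tau3 p 0 = p 0" "tau3 p 1 = p 1" "tau3 p 2 = p 2" "tau3 p 3 = p 3" "tau3 p 4 = p 4"
  "tau3 p 5 = p 5" "tau3 p 6 = p 6" "tau3 p 7 = p 7" "tau3 p 8 = - p 8"
  by (simp_all add: tau1_def tau2_def tau3_def)

lemma proj_eq_tau:
  assumes "proj_eq p q"
  shows "proj_eq (tau1 p) (tau1 q)" "proj_eq (tau2 p) (tau2 q)" "proj_eq (tau3 p) (tau3 q)"
proof -
  from assms obtain c1 c2 c3 where "c1 \<noteq> 0" "c2 \<noteq> 0" "c3 \<noteq> 0"
    "q 0 = c1 * p 0" "q 1 = c1 * p 1" "q 2 = c2 * p 2" "q 3 = c2 * p 3" "q 4 = c3 * p 4"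
    "q 5 = c3 * p 5" "q 6 = c3 * p 6" "q 7 = c3 * p 7" "q 8 = c3 * p 8"
    unfolding proj_eq_iff by blast
  note scalars = this
  show "proj_eq (tau1 p) (tau1 q)"
    using scalars unfolding proj_eq_iff tau1_def
    by (intro exI[of _ c1] exI[of _ c2] exI[of _ c3]) simp
  show "proj_eq (tau2 p) (tau2 q)"
    using scalars unfolding proj_eq_iff tau2_def
    by (intro exI[of _ c2] exI[of _ c1] exI[of _ c3]) simp
  show "proj_eq (tau3 p) (tau3 q)"
    using scalars unfolding proj_eq_iff tau3_def
    by (intro exI[of _ c1] exI[of _ c2] exI[of _ c3]) simp
qed

lemma proj_eq_Ggrp: "g \<in> Ggrp \<Longrightarrow> proj_eq p q \<Longrightarrow> proj_eq (g p) (g q)"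
  by (induction g rule: Ggrp.induct) (simp_all add: proj_eq_tau)

lemma onX_proj_eq:
  assumes "proj_eq p q" "onX a b p"
  shows "onX a b q"
proof -
  from assms(1) obtain c1 c2 c3 where "c1 \<noteq> 0" "c2 \<noteq> 0" "c3 \<noteq> 0"
    "q 0 = c1 * p 0" "q 1 = c1 * p 1" "q 2 = c2 * p 2" "q 3 = c2 * p 3" "q 4 = c3 * p 4"
    "q 5 = c3 * p 5" "q 6 = c3 * p 6" "q 7 = c3 * p 7" "q 8 = c3 * p 8"
    unfolding proj_eq_iff by blast
  moreover from this
  have "F1 q = c1 * c3 * F1 p" "F2 q = c2 * c3 * F2 p" "F3 a b q = c3\<^sup>2 * F3 a b p"
    by (simp_all add: F1_def F2_def F3_def algebra_simps power2_eq_square)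
  ultimately show ?thesis
    using assms(2) by (auto simp: onX_def valid_pt_iff)
qed

lemma onX_tau:
  assumes "onX a b p"
  shows "onX a b (tau1 p)" "onX a b (tau2 p)" "onX a b (tau3 p)"
  using assms by (auto simp: onX_def valid_pt_iff F1_def F2_def F3_def tau1_def tau2_def tau3_def
      algebra_simps)

lemma singX_tau:
  assumes "singX a b p"
  shows "singX a b (tau1 p)" "singX a b (tau2 p)" "singX a b (tau3 p)"
proof -
  from assms obtain c1 c2 c3 where "(c1, c2, c3) \<noteq> (0, 0, 0)"
    "c1 * p 4 = 0" "c1 * p 5 = 0" "c2 * p 6 = 0" "c2 * p 7 = 0"
    "c1 * p 0 + c3 * (p 5 - a * p 7 - b * p 6) = 0"
    "c3 * (p 4 - a * p 6 - b * p 7) = c1 * p 1"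
    "c2 * p 2 + c3 * (p 7 - a * p 5 - b * p 4) = 0"
    "c3 * (p 6 - a * p 4 - b * p 5) = c2 * p 3"
    "c3 * p 8 = 0"
    unfolding singX_iff by blast
  note coeffs = this
  show "singX a b (tau1 p)"
    using coeffs onX_tau(1) assms unfolding singX_iff
    by (simp add: tau1_def)
      (rule exI[of _ "- c1"], rule exI[of _ "- c2"], rule exI[of _ c3], simp add: add_eq_0_iff)
  show "singX a b (tau2 p)"
    using coeffs onX_tau(2) assms unfolding singX_iff
    by (simp add: tau2_def)
      (rule exI[of _ c2], rule exI[of _ c1], rule exI[of _ c3], simp add: add_eq_0_iff)
  show "singX a b (tau3 p)"
    using coeffs onX_tau(3) assms unfolding singX_iff
    by (simp add: tau3_def)
qed

lemma singX_Ggrp: "g \<in> Ggrp \<Longrightarrow> singX a b p \<Longrightarrow> singX a b (g p)"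
  by (induction g rule: Ggrp.induct) (simp_all add: singX_tau)

lemma tau_in_Ggrp: "tau1 \<in> Ggrp" "tau2 \<in> Ggrp" "tau3 \<in> Ggrp"
  using Ggrp.G_1[OF Ggrp.G_id] Ggrp.G_2[OF Ggrp.G_id] Ggrp.G_3[OF Ggrp.G_id] by simp_all

lemmas proj_eq_sym = equivp_symp[OF equivp_proj_eq]
lemmas proj_eq_trans = equivp_transp[OF equivp_proj_eq]

lemma G_fixed_pt_proj_eq:
  assumes "G_fixed_pt a b p" "proj_eq p q"
  shows "G_fixed_pt a b q"
proof -
  have "proj_eq q (g q)" if "g \<in> Ggrp" for g
  proof -
    have "proj_eq p (g p)"
      using assms(1) that unfolding G_fixed_pt_def by blast
    moreover have "proj_eq (g p) (g q)"
      using proj_eq_Ggrp[OF that assms(2)] .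
    ultimately show ?thesis
      using proj_eq_sym[OF assms(2)] by (metis proj_eq_trans)
  qed
  then show ?thesis
    using assms onX_proj_eq unfolding G_fixed_pt_def by blast
qed

lemma G_fixed_pt_coords:
  assumes "G_fixed_pt a b p"
  obtains d f where "d\<^sup>2 = 1" "f\<^sup>2 = 1" "p 5 = d * p 4" "p 6 = f * p 4" "p 7 = d * f * p 4"
    "p 8 = 0"
proof -
  have on: "onX a b p" and fixed: "proj_eq p (tau1 p)" "proj_eq p (tau2 p)" "proj_eq p (tau3 p)"
    using assms tau_in_Ggrp unfolding G_fixed_pt_def by auto
  then have F3: "F3 a b p = 0"
    and nonzero: "p 4 \<noteq> 0 \<or> p 5 \<noteq> 0 \<or> p 6 \<noteq> 0 \<or> p 7 \<noteq> 0 \<or> p 8 \<noteq> 0"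
    unfolding onX_def valid_pt_iff by auto
  from fixed(3) obtain c where c: "p 4 = c * p 4" "p 5 = c * p 5" "p 6 = c * p 6" "p 7 = c * p 7"
    "- p 8 = c * p 8"
    unfolding proj_eq_iff tau_apply by blast
  have w: "p 8 = 0"
  proof (rule ccontr)
    assume "p 8 \<noteq> 0"
    moreover have "(c + 1) * p 8 = 0"
      using c(5) by algebra
    ultimately have "c = -1"
      by (simp add: add_eq_0_iff2)
    with c(1-4) have "p 4 = 0" "p 5 = 0" "p 6 = 0" "p 7 = 0"
      by (simp_all add: eq_neg_iff_add_eq_0)
    with F3 \<open>p 8 \<noteq> 0\<close> show False
      by (simp add: F3_def)
  qed
  from fixed(1) obtain d where d: "p 5 = d * p 4" "p 4 = d * p 5"
    unfolding proj_eq_iff tau_apply by blast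
  from fixed(2) obtain f where f: "p 6 = f * p 4" "p 7 = f * p 5" "p 4 = f * p 6"
    unfolding proj_eq_iff tau_apply by blast
  have x: "p 4 \<noteq> 0"
    using nonzero w d(1) f(1,2) by force
  have "p 4 * (d\<^sup>2 - 1) = 0" "p 4 * (f\<^sup>2 - 1) = 0"
    using d f by algebra+
  with x have "d\<^sup>2 = 1" "f\<^sup>2 = 1"
    by simp_all
  moreover have "p 7 = d * f * p 4"
    using d(1) f(2) by simp
  ultimately show ?thesis
    using that d(1) f(1) w by blast
qed

lemma singX_at_sign_point:
  assumes on: "onX a b p" and signs: "d\<^sup>2 = 1" "f\<^sup>2 = 1"
    and coords: "p 5 = d * p 4" "p 6 = f * p 4" "p 7 = d * f * p 4" "p 8 = 0"
  shows "singX a b p"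
proof -
  define K where "K = d - a * d * f - b * f"
  have d: "d = 1 \<or> d = -1" and f: "f = 1 \<or> f = -1"
    using signs by (simp_all add: power2_eq_1_iff)
  have "F3 a b p = 2 * p 4 * (p 4 * K)"
    using d f unfolding F3_def K_def coords by (elim disjE) (simp_all add: algebra_simps)
  then have "p 4 * K = 0"
    using on by (simp add: onX_def)
  moreover have "p 5 - a * p 7 - b * p 6 = p 4 * K" "p 4 - a * p 6 - b * p 7 = d * (p 4 * K)"
    "p 7 - a * p 5 - b * p 4 = f * (p 4 * K)" "p 6 - a * p 4 - b * p 5 = d * f * (p 4 * K)"
    using d f unfolding K_def coords by (elim disjE; simp add: algebra_simps)+
  ultimately show ?thesis
    using on coords(4) unfolding singX_iff
    by (intro conjI exI[of _ 0] exI[of _ 0] exI[of _ 1]) simp_all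
qed

lemma G_fixed_pt_singX:
  assumes "G_fixed_pt a b p"
  shows "singX a b p"
proof -
  obtain d f where "d\<^sup>2 = 1" "f\<^sup>2 = 1" "p 5 = d * p 4" "p 6 = f * p 4" "p 7 = d * f * p 4"
    "p 8 = 0"
    using G_fixed_pt_coords[OF assms] .
  moreover have "onX a b p"
    using assms by (simp add: G_fixed_pt_def)
  ultimately show ?thesis
    by (intro singX_at_sign_point)
qed

lemma G_fixed_pt_if_unique_singular:
  assumes "singX a b s" "\<And>q. singX a b q \<Longrightarrow> proj_eq s q"
  shows "G_fixed_pt a b s"
proof -
  have "onX a b s"
    using assms(1) by (simp add: singX_def)
  moreover have "proj_eq s (g s)" if "g \<in> Ggrp" for g
    using assms singX_Ggrp[OF that] by blast
  ultimately show ?thesis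
    unfolding G_fixed_pt_def by blast
qed

theorem lemma4p1:
  fixes a b :: complex
  shows "(smoothX a b \<longrightarrow> \<not> (\<exists>p. G_fixed_pt a b p))
     \<and> ((\<exists>s. singX a b s \<and> (\<forall>q. singX a b q \<longrightarrow> proj_eq s q))
         \<longrightarrow> (\<forall>s. singX a b s \<longrightarrow> (\<forall>q. G_fixed_pt a b q \<longleftrightarrow> proj_eq s q)))"
proof (intro conjI impI allI)
  show "smoothX a b \<Longrightarrow> \<not> (\<exists>p. G_fixed_pt a b p)"
    using G_fixed_pt_singX unfolding smoothX_def by blast
next
  fix s q
  assume "\<exists>s. singX a b s \<and> (\<forall>q. singX a b q \<longrightarrow> proj_eq s q)" and s: "singX a b s"
  then have unique: "proj_eq s q" if "singX a b q" for q
    using that proj_eq_sym proj_eq_trans by metis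
  show "G_fixed_pt a b q \<longleftrightarrow> proj_eq s q"
    using G_fixed_pt_singX unique G_fixed_pt_proj_eq G_fixed_pt_if_unique_singular[OF s unique]
    by blast
qed

end
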